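(* Let $n\geq1$ be an integer, let $R$ be a commutative ring in which $(n-1)!$ is invertible, and let $M$ be an $R$-module. Then the $R$-module $\Gamma^n_R(M)$ is generated by the pure symbols $[x]_n$, $x\in M$. Furthermore, for every submodule $N\subset M$, the kernel of the natural reduction $\rho:\Gamma^n_R(M)\to\Gamma^n_R(M/N)$ is generated (as an $R$-module) by the elements $[x+y]_n-[x]_n$ for $x\in M$ and $y\in N$.
   Context: $\Gamma^n_R(M)$ denotes the $n$-th divided power of the $R$-module $M$ (degree-$n$ part of the divided power algebra), with $[x]_n$ the $n$-th divided power of $x$. *)

theory Defs
  imports Complex_Main "HOL-Library.Multiset" "HOL-Library.Poly_Mapping"
begin

text \<open>The ring A below is the
polynomial ring over R (type 'a) in the symbols X(k,i), k a point of the module,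
i a natural number: a monomial is a finite multiset of symbols.  The divided power
algebra is A modulo the ideal generated by the standard relations; its degree-n
part is (A_n) / (I \<inter> A_n), where A_n is spanned by monomials of weight n.\<close>

type_synonym ('k, 'a) dpoly = "('k \<times> nat) multiset \<Rightarrow>\<^sub>0 'a"

definition dsym :: "'k \<Rightarrow> nat \<Rightarrow> ('k, 'a::comm_ring_1) dpoly" where
  "dsym k i = Poly_Mapping.single {#(k, i)#} 1"

definition dconst :: "'a::comm_ring_1 \<Rightarrow> ('k, 'a) dpoly" where
  "dconst c = Poly_Mapping.single 0 c"

definition dscale :: "'a::comm_ring_1 \<Rightarrow> ('k, 'a) dpoly \<Rightarrow> ('k, 'a) dpoly" where
  "dscale c p = dconst c * p"

definition dweight :: "('k \<times> nat) multiset \<Rightarrow> nat" where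
  "dweight m = sum_mset (image_mset snd m)"

definition dhom :: "nat \<Rightarrow> ('k, 'a::comm_ring_1) dpoly set" where
  "dhom n = Modules.module.span dscale {Poly_Mapping.single m 1 | m. dweight m = n}"

text \<open>Defining relations of the divided power algebra of the module
(given by scale on the type 'b), with symbols indexed via q.  For q = id this is
Gamma(M); for q x = coset of x modulo N it is Gamma(M/N) (every element of M/N
is of the form q x and the module operations are computed on representatives).\<close>
definition drels :: "('a::comm_ring_1 \<Rightarrow> 'b::ab_group_add \<Rightarrow> 'b) \<Rightarrow> ('b \<Rightarrow> 'k)
                      \<Rightarrow> ('k, 'a) dpoly set" where
  "drels scale q =
     {dsym (q x) 0 - 1 | x. True}
   \<union> {dsym (q (scale c x)) k - dconst (c ^ k) * dsym (q x) k | c x k. True}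
   \<union> {dsym (q x) i * dsym (q x) j - of_nat ((i + j) choose i) * dsym (q x) (i + j) | x i j. True}
   \<union> {dsym (q (x + y)) k - (\<Sum>i\<le>k. dsym (q x) i * dsym (q y) (k - i)) | x y k. True}"

definition dideal :: "('a::comm_ring_1 \<Rightarrow> 'b::ab_group_add \<Rightarrow> 'b) \<Rightarrow> ('b \<Rightarrow> 'k)
                      \<Rightarrow> ('k, 'a) dpoly set" where
  "dideal scale q = Modules.module.span ((*) :: ('k, 'a) dpoly \<Rightarrow> _ \<Rightarrow> _) (drels scale q)"

definition dmap :: "('k \<Rightarrow> 'l) \<Rightarrow> ('k, 'a::comm_ring_1) dpoly \<Rightarrow> ('l, 'a) dpoly" where
  "dmap f p = (\<Sum>m\<in>Poly_Mapping.keys p.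
                 Poly_Mapping.single (image_mset (apfst f) m) (Poly_Mapping.lookup p m))"

definition coset :: "'b::ab_group_add set \<Rightarrow> 'b \<Rightarrow> 'b set" where
  "coset N x = (\<lambda>y. x + y) ` N"

end

(* Let A be the polynomial ring on the symbols [x]_i and I the ideal of relations, so that
   Gamma^n(M) = A_n / (I \<inter> A_n).  Modulo I the series X_x(t) = sum_i [x]_i t^i satisfies
   X_(x+y) = X_x X_y and X_y = 1 mod t, so in the iterated difference
   Delta_(y_1) ... Delta_(y_n) X_b each difference contributes a factor t and the coefficient of
   t^n is congruent to [y_1]_1 ... [y_n]_1.  This polarization identity writes a product of n
   degree-one symbols as a combination of pure symbols [x]_n, and as a combination of
   differences [x + z]_n - [x]_n when one of the y_j lies in N.  Since i! [x]_i = [x]_1^i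
   modulo I and i! is a unit for i < n, every monomial of weight n other than a pure symbol
   is, up to a unit, such a product; this proves generation.

   For the kernel, let h send x to a fixed representative of x + N.  Changing the symbols of a
   weight-n monomial one at a time shows that u - h(u) lies in the span of the differences for
   every u in A_n.  An element of A_n whose reduction lies in the ideal of M/N is a combination
   of lifted relations of M/N, and since h is idempotent each of those is congruent to a
   relation of M modulo that span.  Conversely the differences vanish in Gamma(M/N). *)

theory Submission
  imports Defs "HOL-Computational_Algebra.Formal_Power_Series"
begin

unbundle fps_syntax

abbreviation dmon :: "('k \<times> nat) multiset \<Rightarrow> ('k, 'a::comm_ring_1) dpoly" where
  "dmon m \<equiv> Poly_Mapping.single m 1"

lemma dconst_mult: "dconst a * dconst b = dconst (a * b)"
  by (simp add: dconst_def mult_single)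

lemma dconst_add: "dconst (a + b) = dconst a + dconst b"
  by (simp add: dconst_def single_add)

lemma dscale_single: "dscale c (Poly_Mapping.single m d) = Poly_Mapping.single m (c * d)"
  by (simp add: dscale_def dconst_def mult_single)

lemma dscale_of_nat: "dscale (of_nat c) p = of_nat c * p"
  by (simp add: dscale_def dconst_def)

lemma single_mult_eq_dscale: "Poly_Mapping.single m c * p = dscale c (dmon m * p)"
  by (simp add: dscale_def dconst_def mult.assoc[symmetric] mult_single)

lemma dmon_add: "dmon (a + b) = (dmon a * dmon b :: ('k, 'a::comm_ring_1) dpoly)"
  by (simp add: mult_single)

lemma dmon_add_mset: "dmon (add_mset (x, i) m) = (dsym x i * dmon m :: ('k, 'a::comm_ring_1) dpoly)"
  by (simp add: dsym_def mult_single)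

lemma module_dscale: "module (dscale :: 'a::comm_ring_1 \<Rightarrow> ('k, 'a) dpoly \<Rightarrow> _)"
  by standard (simp_all add: dscale_def distrib_left distrib_right dconst_add dconst_mult
      mult.assoc[symmetric], simp add: dconst_def)

lemma module_mult: "module ((*) :: ('k, 'a::comm_ring_1) dpoly \<Rightarrow> _ \<Rightarrow> _)"
  by standard (simp_all add: distrib_left distrib_right mult.assoc)

lemma dweight_add_mset [simp]: "dweight (add_mset s m) = snd s + dweight m"
  unfolding dweight_def by simp

lemma dweight_add [simp]: "dweight (a + b) = dweight a + dweight b"
  unfolding dweight_def by simp

lemma dweight_empty [simp]: "dweight {#} = 0"
  unfolding dweight_def by simp

lemma dweight_image_apfst [simp]: "dweight (image_mset (apfst f) m) = dweight m"
  by (induction m) auto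

lemma dweight_replicate [simp]: "dweight (replicate_mset k (x, i)) = k * i"
  by (induction k) auto

lemma snd_le_dweight: "s \<in># m \<Longrightarrow> snd s \<le> dweight m"
  by (metis dweight_add_mset le_add1 multi_member_split)

lemma poly_mapping_sum_single:
  "(\<Sum>m\<in>Poly_Mapping.keys p. Poly_Mapping.single m (Poly_Mapping.lookup p m)) = p"
proof (rule poly_mapping_eqI)
  let ?s = "\<Sum>m\<in>Poly_Mapping.keys p. Poly_Mapping.single m (Poly_Mapping.lookup p m)"
  fix k
  have "Poly_Mapping.lookup ?s k
      = (\<Sum>m\<in>Poly_Mapping.keys p. if m = k then Poly_Mapping.lookup p m else 0)"
    unfolding lookup_sum by (intro sum.cong refl) (simp add: lookup_single when_def)
  then show "Poly_Mapping.lookup ?s k = Poly_Mapping.lookup p k"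
    by (simp add: sum.delta' in_keys_iff)
qed

lemma dhom_iff: "p \<in> dhom n \<longleftrightarrow> (\<forall>m\<in>Poly_Mapping.keys p. dweight m = n)"
proof
  interpret module dscale by (rule module_dscale)
  assume "p \<in> dhom n"
  then show "\<forall>m\<in>Poly_Mapping.keys p. dweight m = n"
    unfolding dhom_def
  proof (induction rule: span_induct_alt)
    case (step c x y)
    have "Poly_Mapping.keys (dscale c x) \<subseteq> Poly_Mapping.keys x"
      using step(1) by (auto simp: dscale_single split: if_splits)
    then have "Poly_Mapping.keys (dscale c x + y) \<subseteq> Poly_Mapping.keys x \<union> Poly_Mapping.keys y"
      using keys_add[of "dscale c x" y] by blast
    with step show ?case
      by auto
  qed simp
next
  interpret module dscale by (rule module_dscale)
  assume "\<forall>m\<in>Poly_Mapping.keys p. dweight m = n"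
  then have "(\<Sum>m\<in>Poly_Mapping.keys p. dscale (Poly_Mapping.lookup p m) (dmon m)) \<in> dhom n"
    unfolding dhom_def by (blast intro: span_sum span_scale span_base)
  then show "p \<in> dhom n"
    by (simp add: dscale_single poly_mapping_sum_single)
qed

lemma dhom_single: "dweight m = n \<Longrightarrow> Poly_Mapping.single m c \<in> dhom n"
  by (simp add: dhom_iff)

lemma dsym_dhom: "dsym x i \<in> dhom i"
  by (simp add: dhom_iff dsym_def)

lemma dhom_one: "1 \<in> dhom 0"
  by (metis dhom_single dweight_empty single_one)

lemma dhom_subspace: "module.subspace dscale (dhom n)"
  unfolding dhom_def by (rule module.subspace_span[OF module_dscale])

lemma dhom_add: "p \<in> dhom n \<Longrightarrow> q \<in> dhom n \<Longrightarrow> p + q \<in> dhom n"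
  and dhom_diff: "p \<in> dhom n \<Longrightarrow> q \<in> dhom n \<Longrightarrow> p - q \<in> dhom n"
  and dhom_scale: "p \<in> dhom n \<Longrightarrow> dscale c p \<in> dhom n"
  and dhom_sum: "(\<And>x. x \<in> A \<Longrightarrow> f x \<in> dhom n) \<Longrightarrow> sum f A \<in> dhom n"
  using dhom_subspace[of n] module.subspace_add[OF module_dscale]
    module.subspace_diff[OF module_dscale] module.subspace_scale[OF module_dscale]
    module.subspace_sum[OF module_dscale]
  by blast+

lemma dhom_mult: "p \<in> dhom a \<Longrightarrow> q \<in> dhom b \<Longrightarrow> p * q \<in> dhom (a + b)"
  unfolding dhom_iff using keys_mult[of p q] by fastforce

lemma dhom_dconst_mult: "p \<in> dhom n \<Longrightarrow> dconst c * p \<in> dhom n"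
  using dhom_scale[of p n c] by (simp add: dscale_def)

lemma dhom_of_nat_mult: "p \<in> dhom n \<Longrightarrow> of_nat c * p \<in> dhom n"
  using dhom_scale[of p n "of_nat c"] by (simp add: dscale_of_nat)

lemma dhom_mult_dmon: "p \<in> dhom d \<Longrightarrow> dweight m + d = n \<Longrightarrow> dmon m * p \<in> dhom n"
  using dhom_mult[OF dhom_single[OF refl]] by blast

lemma dhom_dsym_diff_mult_dmon: "dweight m + k = n \<Longrightarrow> (dsym x k - dsym y k) * dmon m \<in> dhom n"
  using dhom_mult[OF dhom_diff[OF dsym_dhom dsym_dhom] dhom_single[OF refl], of x k y m 1]
  by (simp add: add.commute)

lemma dhom_convolution: "(\<Sum>i\<le>k. dsym x i * dsym y (k - i)) \<in> dhom k"
  by (rule dhom_sum) (metis atMost_iff dhom_mult dsym_dhom le_add_diff_inverse)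

lemma dmap_eq_sum_over:
  assumes "finite A" "Poly_Mapping.keys p \<subseteq> A"
  shows "dmap f p = (\<Sum>m\<in>A. Poly_Mapping.single (image_mset (apfst f) m) (Poly_Mapping.lookup p m))"
  unfolding dmap_def
  by (rule sum.mono_neutral_left) (use assms in \<open>auto simp: in_keys_iff\<close>)

lemma dmap_add: "dmap f (p + q) = dmap f p + dmap f q"
proof -
  let ?A = "Poly_Mapping.keys p \<union> Poly_Mapping.keys q"
  have "dmap f (p + q)
      = (\<Sum>m\<in>?A. Poly_Mapping.single (image_mset (apfst f) m) (Poly_Mapping.lookup (p + q) m))"
    by (rule dmap_eq_sum_over) (use keys_add[of p q] in auto)
  then show ?thesis
    by (simp add: lookup_add single_add sum.distrib dmap_eq_sum_over[of ?A])
qed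

interpretation dmap: additive "dmap f"
  by standard (rule dmap_add)

lemma dmap_single [simp]:
  "dmap f (Poly_Mapping.single m c) = Poly_Mapping.single (image_mset (apfst f) m) c"
  by (cases "c = 0") (simp_all add: dmap_def)

lemma dmap_mult: "dmap f (p * q) = dmap f p * dmap f q"
proof -
  have *: "(\<Sum>a\<in>A. Poly_Mapping.single (h a) (u a)) * (\<Sum>b\<in>B. Poly_Mapping.single (k b) (v b))
      = (\<Sum>a\<in>A. \<Sum>b\<in>B. Poly_Mapping.single (h a + k b) (u a * v b))" for A B h k u v
    unfolding sum_product by (simp add: mult_single)
  let ?f = "image_mset (apfst f)"
  have "p * q = (\<Sum>a\<in>Poly_Mapping.keys p. Poly_Mapping.single a (Poly_Mapping.lookup p a))
      * (\<Sum>b\<in>Poly_Mapping.keys q. Poly_Mapping.single b (Poly_Mapping.lookup q b))"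
    by (simp only: poly_mapping_sum_single)
  then have "dmap f (p * q) = (\<Sum>a\<in>Poly_Mapping.keys p. \<Sum>b\<in>Poly_Mapping.keys q.
      Poly_Mapping.single (?f a + ?f b) (Poly_Mapping.lookup p a * Poly_Mapping.lookup q b))"
    unfolding * by (simp add: dmap.sum)
  also have "\<dots> = dmap f p * dmap f q"
    unfolding dmap_def * ..
  finally show ?thesis .
qed

lemma dmap_one [simp]: "dmap f 1 = 1"
  using dmap_single[of f 0 1] by simp

lemma dmap_of_nat [simp]: "dmap f (of_nat c) = of_nat c"
  using dmap_single[of f 0 "of_nat c"] by (simp del: dmap_single)

lemma dmap_dconst [simp]: "dmap f (dconst c) = dconst c"
  by (simp add: dconst_def)

lemma dmap_dscale: "dmap f (dscale c p) = dscale c (dmap f p)"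
  by (simp add: dscale_def dmap_mult)

lemma dmap_dsym [simp]: "dmap f (dsym x i) = dsym (f x) i"
  by (simp add: dsym_def)

lemma dmap_dmap: "dmap f (dmap g p) = dmap (f \<circ> g) p"
proof -
  have "dmap f (dmap g p) = (\<Sum>m\<in>Poly_Mapping.keys p.
      Poly_Mapping.single (image_mset (apfst f) (image_mset (apfst g) m)) (Poly_Mapping.lookup p m))"
    unfolding dmap_def[of g] by (simp add: dmap.sum)
  then show ?thesis
    unfolding dmap_def[of "f \<circ> g"] by (simp add: multiset.map_comp comp_def apfst_compose)
qed

lemma dmap_dhom: "p \<in> dhom n \<Longrightarrow> dmap f p \<in> dhom n"
  unfolding dmap_def by (rule dhom_sum) (auto simp: dhom_iff intro!: dhom_single)

definition dhom_part :: "nat \<Rightarrow> ('k, 'a::comm_ring_1) dpoly \<Rightarrow> ('k, 'a) dpoly" where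
  "dhom_part n p =
    (\<Sum>m\<in>{m\<in>Poly_Mapping.keys p. dweight m = n}. Poly_Mapping.single m (Poly_Mapping.lookup p m))"

lemma lookup_dhom_part:
  "Poly_Mapping.lookup (dhom_part n p) k = (if dweight k = n then Poly_Mapping.lookup p k else 0)"
proof -
  have "Poly_Mapping.lookup (dhom_part n p) k
      = (\<Sum>m\<in>{m\<in>Poly_Mapping.keys p. dweight m = n}. if m = k then Poly_Mapping.lookup p m else 0)"
    unfolding dhom_part_def lookup_sum by (intro sum.cong refl) (simp add: lookup_single when_def)
  then show ?thesis
    by (simp add: sum.delta' in_keys_iff)
qed

interpretation dhom_part: additive "dhom_part n"
  by standard (rule poly_mapping_eqI, simp add: lookup_dhom_part lookup_add)

lemma dhom_part_dhom: "p \<in> dhom n \<Longrightarrow> dhom_part n p = p"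
  by (rule poly_mapping_eqI) (auto simp: lookup_dhom_part dhom_iff in_keys_iff)

lemma dhom_part_other: "p \<in> dhom d \<Longrightarrow> d \<noteq> n \<Longrightarrow> dhom_part n p = 0"
  by (rule poly_mapping_eqI) (auto simp: lookup_dhom_part dhom_iff in_keys_iff)

lemma dideal_subspace: "module.subspace (*) (dideal scale q)"
  unfolding dideal_def by (rule module.subspace_span[OF module_mult])

lemma dideal_add: "a \<in> dideal scale q \<Longrightarrow> b \<in> dideal scale q \<Longrightarrow> a + b \<in> dideal scale q"
  and dideal_diff: "a \<in> dideal scale q \<Longrightarrow> b \<in> dideal scale q \<Longrightarrow> a - b \<in> dideal scale q"
  and dideal_mult_left: "a \<in> dideal scale q \<Longrightarrow> c * a \<in> dideal scale q"
  and dideal_sum: "(\<And>x. x \<in> A \<Longrightarrow> f x \<in> dideal scale q) \<Longrightarrow> sum f A \<in> dideal scale q"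
  using dideal_subspace[of scale q] module.subspace_add[OF module_mult]
    module.subspace_diff[OF module_mult] module.subspace_scale[OF module_mult]
    module.subspace_sum[OF module_mult]
  by blast+

lemma dideal_zero: "0 \<in> dideal scale q"
  using module.subspace_0[OF module_mult dideal_subspace] .

lemma dideal_mult_right: "a \<in> dideal scale q \<Longrightarrow> a * c \<in> dideal scale q"
  using dideal_mult_left[of a scale q c] by (simp add: mult.commute)

lemma drels_dideal: "r \<in> drels scale q \<Longrightarrow> r \<in> dideal scale q"
  unfolding dideal_def by (rule module.span_base[OF module_mult])

lemma dsym_zero_rel: "dsym (q x) 0 - 1 \<in> dideal scale q"
  and dsym_mult_rel:
    "dsym (q x) i * dsym (q x) j - of_nat ((i + j) choose i) * dsym (q x) (i + j) \<in> dideal scale q"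
  and dsym_add_rel: "dsym (q (x + y)) k - (\<Sum>i\<le>k. dsym (q x) i * dsym (q y) (k - i)) \<in> dideal scale q"
  by (rule drels_dideal, unfold drels_def, blast)+

lemma dsym_one_add_cong: "dsym (x + y) 1 - dsym x 1 - dsym y 1 \<in> dideal scale (\<lambda>x. x)"
proof -
  have "(dsym (x + y) 1 - (dsym x 0 * dsym y 1 + dsym x 1 * dsym y 0))
      + (dsym x 0 - 1) * dsym y 1 + dsym x 1 * (dsym y 0 - 1) \<in> dideal scale (\<lambda>x. x)"
    using dsym_add_rel[of "\<lambda>x. x" x y 1 scale] dsym_zero_rel[of "\<lambda>x. x" x scale]
      dsym_zero_rel[of "\<lambda>x. x" y scale]
    by (intro dideal_add dideal_mult_left dideal_mult_right) (simp_all add: atMost_Suc add.commute)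
  then show ?thesis
    by (simp add: algebra_simps)
qed

lemma drels_eq_image_dmap: "drels scale q = dmap q ` drels scale (\<lambda>x. x)"
proof
  show "dmap q ` drels scale (\<lambda>x. x) \<subseteq> drels scale q"
    unfolding drels_def by (fastforce simp: dmap.diff dmap_mult dmap.sum)
  show "drels scale q \<subseteq> dmap q ` drels scale (\<lambda>x. x)"
  proof
    fix r assume "r \<in> drels scale q"
    then show "r \<in> dmap q ` drels scale (\<lambda>x. x)"
      unfolding drels_def[of scale q]
    proof (elim UnE CollectE exE conjE)
      fix x assume "r = dsym (q x) 0 - 1"
      then show ?thesis
        by (intro image_eqI[of _ _ "dsym x 0 - 1"]) (auto simp: drels_def dmap.diff)
    next
      fix c x k assume r: "r = dsym (q (scale c x)) k - dconst (c ^ k) * dsym (q x) k"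
      show ?thesis
        by (rule image_eqI[of _ _ "dsym (scale c x) k - dconst (c ^ k) * dsym x k"])
           (simp add: r dmap.diff dmap_mult, unfold drels_def, blast)
    next
      fix x i j
      assume r: "r = dsym (q x) i * dsym (q x) j - of_nat ((i + j) choose i) * dsym (q x) (i + j)"
      show ?thesis
        by (rule image_eqI[of _ _ "dsym x i * dsym x j - of_nat ((i + j) choose i) * dsym x (i + j)"])
           (simp add: r dmap.diff dmap_mult, unfold drels_def, blast)
    next
      fix x y k assume r: "r = dsym (q (x + y)) k - (\<Sum>i\<le>k. dsym (q x) i * dsym (q y) (k - i))"
      show ?thesis
        by (rule image_eqI[of _ _ "dsym (x + y) k - (\<Sum>i\<le>k. dsym x i * dsym y (k - i))"])
           (simp add: r dmap.diff dmap_mult dmap.sum, unfold drels_def, blast)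
    qed
  qed
qed

lemma dmap_dideal:
  fixes scale :: "'a::comm_ring_1 \<Rightarrow> 'b::ab_group_add \<Rightarrow> 'b"
  assumes "b \<in> dideal scale (\<lambda>x. x)"
  shows "dmap q b \<in> dideal scale q"
proof -
  interpret ring_module: module "(*) :: ('b, 'a) dpoly \<Rightarrow> _" by (rule module_mult)
  show ?thesis
    using assms unfolding dideal_def[of scale "\<lambda>x. x"]
  proof (induction rule: ring_module.span_induct_alt)
    case (step c r y)
    have "dmap q r \<in> drels scale q"
      unfolding drels_eq_image_dmap[of scale q] using step(1) by (rule imageI)
    from dideal_add[OF dideal_mult_left[OF drels_dideal[OF this]] step(2)]
    show ?case
      by (simp add: dmap_add dmap_mult)
  qed (simp add: dmap.zero dideal_def module.span_zero[OF module_mult])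
qed

lemma drels_dhom: "r \<in> drels scale q \<Longrightarrow> \<exists>d. r \<in> dhom d"
  unfolding drels_def
proof (elim UnE CollectE exE conjE)
  fix x assume "r = dsym (q x) 0 - 1"
  then have "r \<in> dhom 0"
    by (simp add: dhom_diff dsym_dhom dhom_one)
  then show ?thesis ..
next
  fix c x k assume "r = dsym (q (scale c x)) k - dconst (c ^ k) * dsym (q x) k"
  then have "r \<in> dhom k"
    by (simp add: dhom_diff dsym_dhom dhom_dconst_mult)
  then show ?thesis ..
next
  fix x i j assume "r = dsym (q x) i * dsym (q x) j - of_nat ((i + j) choose i) * dsym (q x) (i + j)"
  then have "r \<in> dhom (i + j)"
    by (simp add: dhom_diff dhom_mult dsym_dhom dhom_of_nat_mult)
  then show ?thesis ..
next
  fix x y k assume "r = dsym (q (x + y)) k - (\<Sum>i\<le>k. dsym (q x) i * dsym (q y) (k - i))"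
  then have "r \<in> dhom k"
    by (simp add: dhom_diff dsym_dhom dhom_convolution)
  then show ?thesis ..
qed

text \<open>The preimage in degree \<open>n\<close> of the submodule of \<open>\<Gamma>\<^sup>n\<close> generated by the image of \<open>X\<close>.\<close>

definition rel_span :: "('a::comm_ring_1 \<Rightarrow> 'b::ab_group_add \<Rightarrow> 'b) \<Rightarrow> nat \<Rightarrow> ('b, 'a) dpoly set
                         \<Rightarrow> ('b, 'a) dpoly set" where
  "rel_span scale n X = module.span dscale (X \<union> (dideal scale (\<lambda>x. x) \<inter> dhom n))"

lemma dideal_dhom_subspace: "module.subspace dscale (dideal scale q \<inter> dhom n)"
proof (rule module.subspace_inter[OF module_dscale _ dhom_subspace])
  show "module.subspace dscale (dideal scale q)"
    using module.subspace_0[OF module_mult dideal_subspace]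
    by (intro module.subspaceI[OF module_dscale]) (auto simp: dscale_def dideal_add dideal_mult_left)
qed

lemma rel_span_eq:
  "rel_span scale n X = {a + b | a b. a \<in> module.span dscale X \<and> b \<in> dideal scale (\<lambda>x. x) \<inter> dhom n}"
proof -
  have "module.span dscale (dideal scale (\<lambda>x. x) \<inter> dhom n) = dideal scale (\<lambda>x. x) \<inter> dhom n"
    using module.span_eq_iff[OF module_dscale] dideal_dhom_subspace by blast
  then show ?thesis
    unfolding rel_span_def module.span_Un[OF module_dscale] by simp
qed

lemma rel_span_subspace: "module.subspace dscale (rel_span scale n X)"
  unfolding rel_span_def by (rule module.subspace_span[OF module_dscale])

lemma rel_span_add: "p \<in> rel_span scale n X \<Longrightarrow> p' \<in> rel_span scale n X \<Longrightarrow> p + p' \<in> rel_span scale n X"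
  unfolding rel_span_def by (rule module.span_add[OF module_dscale])

lemma rel_span_diff: "p \<in> rel_span scale n X \<Longrightarrow> p' \<in> rel_span scale n X \<Longrightarrow> p - p' \<in> rel_span scale n X"
  unfolding rel_span_def by (rule module.span_diff[OF module_dscale])

lemma rel_span_scale: "p \<in> rel_span scale n X \<Longrightarrow> dscale c p \<in> rel_span scale n X"
  unfolding rel_span_def by (rule module.span_scale[OF module_dscale])

lemma rel_span_zero: "0 \<in> rel_span scale n X"
  unfolding rel_span_def by (rule module.span_zero[OF module_dscale])

lemma rel_span_sum: "(\<And>x. x \<in> A \<Longrightarrow> f x \<in> rel_span scale n X) \<Longrightarrow> sum f A \<in> rel_span scale n X"
  unfolding rel_span_def by (rule module.span_sum[OF module_dscale])

lemma rel_span_span: "p \<in> module.span dscale X \<Longrightarrow> p \<in> rel_span scale n X"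
  unfolding rel_span_def using module.span_mono[OF module_dscale, of X] by blast

lemma rel_span_base: "p \<in> X \<Longrightarrow> p \<in> rel_span scale n X"
  unfolding rel_span_def by (simp add: module.span_base[OF module_dscale])

lemma rel_span_rel: "b \<in> dideal scale (\<lambda>x. x) \<Longrightarrow> b \<in> dhom n \<Longrightarrow> b \<in> rel_span scale n X"
  unfolding rel_span_def by (simp add: module.span_base[OF module_dscale])

context
  fixes X :: "('b::ab_group_add, 'a::comm_ring_1) dpoly set" and n :: nat
  assumes X_dhom: "X \<subseteq> dhom n"
begin

lemma rel_span_subset_dhom: "rel_span scale n X \<subseteq> dhom n"
  unfolding rel_span_def
  by (rule module.span_minimal[OF module_dscale _ dhom_subspace]) (use X_dhom in blast)

lemma rel_span_cong:
  assumes "p \<in> rel_span scale n X" "p' \<in> dhom n" "p' - p \<in> dideal scale (\<lambda>x. x)"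
  shows "p' \<in> rel_span scale n X"
proof -
  have "p \<in> dhom n"
    using assms(1) rel_span_subset_dhom by blast
  with assms have "p' - p \<in> rel_span scale n X"
    by (simp add: rel_span_rel dhom_diff)
  from rel_span_add[OF assms(1) this] show ?thesis by simp
qed

end

lemma rel_span_of_nat_unit_cancel:
  fixes p :: "('b::ab_group_add, 'a::comm_ring_1) dpoly"
  assumes "(of_nat c :: 'a) dvd 1" "of_nat c * p \<in> rel_span scale n X"
  shows "p \<in> rel_span scale n X"
proof -
  obtain u where u: "1 = (of_nat c :: 'a) * u" using assms(1) by (elim dvdE)
  have "dscale u (dscale (of_nat c) p) \<in> rel_span scale n X"
    using assms(2) by (simp add: dscale_of_nat rel_span_scale)
  also have "dscale u (dscale (of_nat c) p) = p"
    using u by (simp add: module.scale_scale[OF module_dscale] module.scale_one[OF module_dscale]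
        mult.commute)
  finally show ?thesis .
qed

definition pure_dsyms :: "nat \<Rightarrow> ('k, 'a::comm_ring_1) dpoly set" where
  "pure_dsyms n = {dsym x n | x. True}"

definition dsym_shifts :: "nat \<Rightarrow> 'b::ab_group_add set \<Rightarrow> ('b, 'a::comm_ring_1) dpoly set" where
  "dsym_shifts n N = {dsym (x + y) n - dsym x n | x y. y \<in> N}"

lemma pure_dsyms_dhom: "pure_dsyms n \<subseteq> dhom n"
  unfolding pure_dsyms_def by (auto intro: dsym_dhom)

lemma dsym_shifts_dhom: "dsym_shifts n N \<subseteq> dhom n"
  unfolding dsym_shifts_def by (auto intro: dhom_diff dsym_dhom)

section \<open>Polarization\<close>

definition dlinear :: "'k list \<Rightarrow> ('k \<times> nat) multiset" where
  "dlinear ys = mset (map (\<lambda>y. (y, 1)) ys)"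

lemma dweight_dlinear [simp]: "dweight (dlinear ys) = length ys"
  by (induction ys) (simp_all add: dlinear_def)

lemma dmon_dlinear: "dmon (dlinear ys) = (\<Prod>y\<leftarrow>ys. dsym y 1 :: ('k, 'a::comm_ring_1) dpoly)"
  by (induction ys) (simp_all add: dlinear_def dmon_add_mset)

definition dseries :: "'k \<Rightarrow> ('k, 'a::comm_ring_1) dpoly fps" where
  "dseries x = Abs_fps (dsym x)"

definition dseries_tail :: "'k \<Rightarrow> ('k, 'a::comm_ring_1) dpoly fps" where
  "dseries_tail x = Abs_fps (\<lambda>d. dsym x (Suc d))"

primrec dseries_diff :: "'b::ab_group_add \<Rightarrow> 'b list \<Rightarrow> ('b, 'a::comm_ring_1) dpoly fps" where
  "dseries_diff b [] = dseries b"
| "dseries_diff b (y # ys) = dseries_diff (b + y) ys - dseries_diff b ys"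

definition fps_cong :: "('a::comm_ring_1 \<Rightarrow> 'b::ab_group_add \<Rightarrow> 'b)
                         \<Rightarrow> ('b, 'a) dpoly fps \<Rightarrow> ('b, 'a) dpoly fps \<Rightarrow> bool" where
  "fps_cong scale f g \<longleftrightarrow> (\<forall>d. f $ d - g $ d \<in> dideal scale (\<lambda>x. x))"

lemma fps_cong_refl: "fps_cong scale f f"
  by (simp add: fps_cong_def dideal_zero)

lemma fps_cong_trans [trans]: "fps_cong scale f g \<Longrightarrow> fps_cong scale g h \<Longrightarrow> fps_cong scale f h"
  unfolding fps_cong_def
proof
  fix d
  assume "\<forall>d. f $ d - g $ d \<in> dideal scale (\<lambda>x. x)" "\<forall>d. g $ d - h $ d \<in> dideal scale (\<lambda>x. x)"
  then have "(f $ d - g $ d) + (g $ d - h $ d) \<in> dideal scale (\<lambda>x. x)"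
    by (blast intro: dideal_add)
  then show "f $ d - h $ d \<in> dideal scale (\<lambda>x. x)"
    by simp
qed

lemma fps_cong_diff: "fps_cong scale f g \<Longrightarrow> fps_cong scale f' g' \<Longrightarrow> fps_cong scale (f - f') (g - g')"
  unfolding fps_cong_def
proof
  fix d
  assume "\<forall>d. f $ d - g $ d \<in> dideal scale (\<lambda>x. x)" "\<forall>d. f' $ d - g' $ d \<in> dideal scale (\<lambda>x. x)"
  then have "(f $ d - g $ d) - (f' $ d - g' $ d) \<in> dideal scale (\<lambda>x. x)"
    by (blast intro: dideal_diff)
  then show "(f - f') $ d - (g - g') $ d \<in> dideal scale (\<lambda>x. x)"
    by (simp add: algebra_simps)
qed

lemma fps_cong_mult_left: "fps_cong scale f g \<Longrightarrow> fps_cong scale (h * f) (h * g)"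
  unfolding fps_cong_def
proof
  fix d assume "\<forall>d. f $ d - g $ d \<in> dideal scale (\<lambda>x. x)"
  then have "(\<Sum>i = 0..d. h $ i * (f $ (d - i) - g $ (d - i))) \<in> dideal scale (\<lambda>x. x)"
    by (blast intro: dideal_sum dideal_mult_left)
  then show "(h * f) $ d - (h * g) $ d \<in> dideal scale (\<lambda>x. x)"
    by (simp add: fps_mult_nth sum_subtractf right_diff_distrib)
qed

lemma fps_cong_mult_right: "fps_cong scale f g \<Longrightarrow> fps_cong scale (f * h) (g * h)"
  using fps_cong_mult_left[of scale f g h] by (simp add: mult.commute)

lemma dseries_add_cong: "fps_cong scale (dseries (x + y)) (dseries x * dseries y)"
  unfolding fps_cong_def
proof
  fix d
  show "dseries (x + y) $ d - (dseries x * dseries y) $ d \<in> dideal scale (\<lambda>x. x)"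
    using dsym_add_rel[of "\<lambda>x. x" x y d scale] by (simp add: dseries_def fps_mult_nth atLeast0AtMost)
qed

lemma dseries_minus_one_cong: "fps_cong scale (dseries y - 1) (fps_X * dseries_tail y)"
  unfolding fps_cong_def
proof
  fix d
  show "(dseries y - 1) $ d - (fps_X * dseries_tail y) $ d \<in> dideal scale (\<lambda>x. x)"
    using dsym_zero_rel[of "\<lambda>x. x" y scale] dideal_zero
    by (cases d) (simp_all add: dseries_def dseries_tail_def fps_X_mult_nth)
qed

lemma dseries_diff_cong:
  "fps_cong scale (dseries_diff b ys) (dseries b * (fps_X ^ length ys * (\<Prod>y\<leftarrow>ys. dseries_tail y)))"
proof (induction ys arbitrary: b)
  case Nil
  show ?case by (simp add: fps_cong_refl)
next
  case (Cons y ys)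
  let ?T = "fps_X ^ length ys * (\<Prod>y\<leftarrow>ys. dseries_tail y)"
  have "fps_cong scale (dseries_diff b (y # ys)) (dseries (b + y) * ?T - dseries b * ?T)"
    unfolding dseries_diff.simps by (rule fps_cong_diff[OF Cons.IH Cons.IH])
  also have "fps_cong scale \<dots> (dseries b * dseries y * ?T - dseries b * ?T)"
    by (intro fps_cong_diff fps_cong_mult_right dseries_add_cong fps_cong_refl)
  also have "dseries b * dseries y * ?T - dseries b * ?T = (dseries y - 1) * (dseries b * ?T)"
    by (simp add: algebra_simps)
  also have "fps_cong scale \<dots> ((fps_X * dseries_tail y) * (dseries b * ?T))"
    by (intro fps_cong_mult_right dseries_minus_one_cong)
  also have "(fps_X * dseries_tail y) * (dseries b * ?T)
      = dseries b * (fps_X ^ length (y # ys) * (\<Prod>y\<leftarrow>y # ys. dseries_tail y))"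
    by (simp add: mult_ac)
  finally show ?case .
qed

lemma fps_mult_X_power_mult_nth_self: "(f * (fps_X ^ L * g)) $ L = f $ 0 * g $ 0"
proof -
  have "(f * (fps_X ^ L * g)) $ L = (\<Sum>i\<in>{0}. f $ i * (fps_X ^ L * g) $ (L - i))"
    unfolding fps_mult_nth[of f] by (rule sum.mono_neutral_right) (auto simp: fps_X_power_mult_nth)
  then show ?thesis
    by (simp add: fps_X_power_mult_nth)
qed

lemma prod_dseries_tail_nth_0: "(\<Prod>y\<leftarrow>ys. dseries_tail y) $ 0 = (\<Prod>y\<leftarrow>ys. dsym y 1)"
  by (induction ys) (simp_all add: dseries_tail_def)

lemma dseries_diff_nth_length:
  "dseries_diff b ys $ length ys - dmon (dlinear ys) \<in> dideal scale (\<lambda>x. x)"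
proof -
  have "dseries_diff b ys $ length ys - dsym b 0 * dmon (dlinear ys) \<in> dideal scale (\<lambda>x. x)"
    using dseries_diff_cong[of scale b ys] unfolding fps_cong_def
    by (metis dmon_dlinear dseries_def fps_mult_X_power_mult_nth_self fps_nth_Abs_fps
        prod_dseries_tail_nth_0)
  moreover have "(dsym b 0 - 1) * dmon (dlinear ys) \<in> dideal scale (\<lambda>x. x)"
    using dsym_zero_rel[of "\<lambda>x. x" b scale] by (simp add: dideal_mult_right)
  ultimately have "(dseries_diff b ys $ length ys - dsym b 0 * dmon (dlinear ys))
      + (dsym b 0 - 1) * dmon (dlinear ys) \<in> dideal scale (\<lambda>x. x)"
    by (rule dideal_add)
  then show ?thesis
    by (simp add: algebra_simps)
qed

lemma dseries_diff_nth_pure: "dseries_diff b ys $ d \<in> module.span dscale (pure_dsyms d)"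
proof (induction ys arbitrary: b)
  case Nil
  then show ?case
    by (auto simp: dseries_def pure_dsyms_def intro: module.span_base[OF module_dscale])
next
  case (Cons y ys)
  then show ?case
    by (simp add: module.span_diff[OF module_dscale])
qed

lemma dseries_diff_nth_shift:
  assumes "z \<in> N"
  shows "dseries_diff (b + z) ys $ d - dseries_diff b ys $ d \<in> module.span dscale (dsym_shifts d N)"
proof (induction ys arbitrary: b)
  case Nil
  then show ?case
    using assms by (auto simp: dseries_def dsym_shifts_def intro!: module.span_base[OF module_dscale])
next
  case (Cons y ys)
  from module.span_diff[OF module_dscale Cons.IH[of "b + y"] Cons.IH[of b]]
  show ?case
    by (simp add: add.commute add.left_commute algebra_simps)
qed

section \<open>Reduction to symbols of degree one\<close>

definition dflat :: "('k \<times> nat) multiset \<Rightarrow> ('k \<times> nat) multiset" where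
  "dflat M = (\<Sum>s\<in>#M. replicate_mset (snd s) (fst s, 1))"

definition dfact :: "('k \<times> nat) multiset \<Rightarrow> nat" where
  "dfact M = (\<Prod>s\<in>#M. fact (snd s))"

lemma dflat_add_mset [simp]: "dflat (add_mset (x, i) M) = replicate_mset i (x, 1) + dflat M"
  by (simp add: dflat_def)

lemma dfact_add_mset [simp]: "dfact (add_mset (x, i) M) = fact i * dfact M"
  by (simp add: dfact_def)

lemma dflat_eq_dlinear: "\<exists>ys. dflat M = dlinear ys \<and> length ys = dweight M"
proof (induction M)
  case empty
  show ?case by (simp add: dflat_def dlinear_def)
next
  case (add s M)
  then obtain ys where "dflat M = dlinear ys" "length ys = dweight M"
    by blast
  then have "dflat (add_mset s M) = dlinear (replicate (snd s) (fst s) @ ys)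
      \<and> length (replicate (snd s) (fst s) @ ys) = dweight (add_mset s M)"
    by (cases s) (simp add: dlinear_def)
  then show ?case ..
qed

lemma dweight_dflat [simp]: "dweight (dflat M) = dweight M"
  using dflat_eq_dlinear[of M] by auto

lemma snd_in_dflat: "s \<in># dflat M \<Longrightarrow> snd s = 1"
  using dflat_eq_dlinear[of M] by (auto simp: dlinear_def)

lemma weight_one_eq_dlinear:
  assumes "\<forall>s\<in>#M. snd s = 1"
  shows "\<exists>ys. M = dlinear ys"
proof -
  obtain ys where ys: "mset ys = image_mset fst M"
    using ex_mset by blast
  have "dlinear ys = image_mset (\<lambda>s. (fst s, 1)) M"
    by (simp add: dlinear_def mset_map ys multiset.map_comp comp_def)
  also have "\<dots> = M"
    using assms by (induction M) (auto intro: prod_eqI)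
  finally show ?thesis by (intro exI) (rule sym)
qed

lemma fact_mult_dsym_cong:
  "of_nat (fact i) * dsym x i - dmon (replicate_mset i (x, 1)) \<in> dideal scale (\<lambda>x. x)"
proof (induction i)
  case 0
  show ?case
    using dsym_zero_rel[of "\<lambda>x. x" x scale] by simp
next
  case (Suc i)
  have "dsym x 1 * dsym x i - of_nat (Suc i) * dsym x (Suc i) \<in> dideal scale (\<lambda>x. x)"
    using dsym_mult_rel[of "\<lambda>x. x" x 1 i scale] by simp
  from dideal_diff[OF dideal_mult_left[OF Suc.IH] dideal_mult_left[OF this]]
  have "dsym x 1 * (of_nat (fact i) * dsym x i - dmon (replicate_mset i (x, 1)))
      - of_nat (fact i) * (dsym x 1 * dsym x i - of_nat (Suc i) * dsym x (Suc i))
      \<in> dideal scale (\<lambda>x. x)" .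
  then show ?case
    by (simp add: dmon_add_mset algebra_simps)
qed

lemma dfact_mult_dmon_cong: "of_nat (dfact M) * dmon M - dmon (dflat M) \<in> dideal scale (\<lambda>x. x)"
proof (induction M)
  case empty
  show ?case by (simp add: dfact_def dflat_def dideal_zero)
next
  case (add s M)
  obtain x i where s: "s = (x, i)" by (cases s)
  let ?A = "of_nat (fact i) * dsym x i - dmon (replicate_mset i (x, 1))"
  let ?B = "of_nat (dfact M) * dmon M - dmon (dflat M)"
  have "?A * (of_nat (dfact M) * dmon M) + dmon (replicate_mset i (x, 1)) * ?B \<in> dideal scale (\<lambda>x. x)"
    by (intro dideal_add dideal_mult_right dideal_mult_left fact_mult_dsym_cong add.IH)
  then show ?case
    by (simp add: s dmon_add_mset dmon_add algebra_simps)
qed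

lemma dweight_zero_dmon_cong: "dweight M = 0 \<Longrightarrow> dmon M - 1 \<in> dideal scale (\<lambda>x. x)"
proof (induction M)
  case empty
  show ?case by (simp add: dideal_zero)
next
  case (add s M)
  obtain x where s: "s = (x, 0)"
    using add.prems by (cases s) simp
  have "dsym x 0 * (dmon M - 1) + (dsym x 0 - 1) \<in> dideal scale (\<lambda>x. x)"
    using add dsym_zero_rel[of "\<lambda>x. x" x scale]
    by (intro dideal_add dideal_mult_left) (simp_all add: s)
  then show ?case
    by (simp add: s dmon_add_mset algebra_simps)
qed

lemma of_nat_fact_unit:
  assumes "(of_nat (fact m) :: 'a::comm_ring_1) dvd 1" "k \<le> m"
  shows "(of_nat (fact k) :: 'a) dvd 1"
proof -
  obtain q where "fact m = (fact k :: nat) * q"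
    using fact_dvd[OF assms(2)] by (rule dvdE)
  then have "(of_nat (fact k) :: 'a) dvd of_nat (fact m)"
    by simp
  then show ?thesis
    using assms(1) by (rule dvd_trans)
qed

lemma of_nat_dfact_unit:
  assumes "(of_nat (fact m) :: 'a::comm_ring_1) dvd 1" "\<forall>s\<in>#M. snd s \<le> m"
  shows "(of_nat (dfact M) :: 'a) dvd 1"
  using assms(2)
proof (induction M)
  case (add s M)
  then have "(of_nat (fact (snd s)) :: 'a) dvd 1" "(of_nat (dfact M) :: 'a) dvd 1"
    using of_nat_fact_unit[OF assms(1)] by auto
  then have "(of_nat (fact (snd s)) * of_nat (dfact M) :: 'a) dvd 1 * 1"
    by (rule mult_dvd_mono)
  then show ?case
    by (cases s) simp
qed (simp add: dfact_def)

section \<open>Generators of \<open>\<Gamma>\<^sup>n\<close>\<close>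

lemma dmon_in_rel_span_pure:
  fixes scale :: "'a::comm_ring_1 \<Rightarrow> 'b::ab_group_add \<Rightarrow> 'b"
  assumes unit: "(of_nat (fact (n - 1)) :: 'a) dvd 1" and w: "dweight M = n"
  shows "dmon M \<in> rel_span scale n (pure_dsyms n)"
proof (cases "\<exists>s\<in>#M. snd s = n")
  case True
  then obtain x R where M: "M = add_mset (x, n) R"
    by (metis multi_member_split prod.collapse)
  have pure: "dsym x n \<in> rel_span scale n (pure_dsyms n)"
    by (rule rel_span_base) (auto simp: pure_dsyms_def)
  have "dsym x n * (dmon R - 1) \<in> dideal scale (\<lambda>x. x)"
    using w M by (intro dideal_mult_left dweight_zero_dmon_cong) simp
  then have "dmon M - dsym x n \<in> dideal scale (\<lambda>x. x)"
    by (simp add: M dmon_add_mset algebra_simps)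
  from rel_span_cong[OF pure_dsyms_dhom pure dhom_single[OF w] this] show ?thesis .
next
  case False
  then have "\<forall>s\<in>#M. snd s \<le> n - 1"
    using w snd_le_dweight by fastforce
  then have C_unit: "(of_nat (dfact M) :: 'a) dvd 1"
    by (rule of_nat_dfact_unit[OF unit])
  obtain ys where ys: "dflat M = dlinear ys" "length ys = n"
    using dflat_eq_dlinear w by blast
  have "dseries_diff 0 ys $ n \<in> rel_span scale n (pure_dsyms n)"
    using dseries_diff_nth_pure by (rule rel_span_span)
  moreover have "dmon (dflat M) \<in> dhom n"
    using w by (simp add: dhom_single)
  moreover have "dmon (dflat M) - dseries_diff 0 ys $ n \<in> dideal scale (\<lambda>x. x)"
    using dideal_diff[OF dideal_zero dseries_diff_nth_length[of 0 ys scale]] ys by simp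
  ultimately have "dmon (dflat M) \<in> rel_span scale n (pure_dsyms n)"
    by (rule rel_span_cong[OF pure_dsyms_dhom])
  moreover have "of_nat (dfact M) * dmon M \<in> dhom n"
    using w by (simp add: dhom_of_nat_mult dhom_single)
  ultimately have "of_nat (dfact M) * dmon M \<in> rel_span scale n (pure_dsyms n)"
    using dfact_mult_dmon_cong[of M scale] by (rule rel_span_cong[OF pure_dsyms_dhom])
  then show ?thesis
    by (rule rel_span_of_nat_unit_cancel[OF C_unit])
qed

lemma dhom_subset_rel_span_pure:
  fixes scale :: "'a::comm_ring_1 \<Rightarrow> 'b::ab_group_add \<Rightarrow> 'b"
  assumes "(of_nat (fact (n - 1)) :: 'a) dvd 1"
  shows "dhom n \<subseteq> rel_span scale n (pure_dsyms n)"
  unfolding dhom_def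
  by (rule module.span_minimal[OF module_dscale _ rel_span_subspace])
     (use dmon_in_rel_span_pure[OF assms] in blast)

section \<open>The kernel of the reduction modulo a submodule\<close>

lemma dmon_substitution_telescope:
  assumes S: "module.subspace dscale S"
    and step: "\<And>x i M. Q (x, i) \<Longrightarrow> \<forall>s\<in>#M. Q s \<Longrightarrow> dweight M + i = n \<Longrightarrow>
                 (dsym (h x) i - dsym x i) * dmon M \<in> S"
    and Q_h: "\<And>x i. Q (x, i) \<Longrightarrow> Q (h x, i)"
  shows "\<forall>s\<in>#m1. Q s \<Longrightarrow> \<forall>s\<in>#m2. Q s \<Longrightarrow> dweight m1 + dweight m2 = n \<Longrightarrow>
    dmon (m1 + image_mset (apfst h) m2) - dmon (m1 + m2) \<in> S"
proof (induction m2 arbitrary: m1)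
  case empty
  then show ?case
    using module.subspace_0[OF module_dscale S] by simp
next
  case (add s m2)
  obtain x i where s: "s = (x, i)" by (cases s)
  have "dmon (add_mset (h x, i) m1 + image_mset (apfst h) m2) - dmon (add_mset (h x, i) m1 + m2)
      \<in> S"
    using add.prems Q_h s by (intro add.IH) auto
  moreover have "(dsym (h x) i - dsym x i) * dmon (m1 + m2) \<in> S"
    using add.prems s by (intro step) auto
  ultimately have "dmon (add_mset (h x, i) m1 + image_mset (apfst h) m2)
      - dmon (add_mset (h x, i) m1 + m2) + (dsym (h x) i - dsym x i) * dmon (m1 + m2) \<in> S"
    by (rule module.subspace_add[OF module_dscale S])
  then show ?case
    by (simp add: s dmon_add_mset algebra_simps)
qed

lemma dsym_one_shift_mult_dlinear_in_rel_span:
  fixes scale :: "'a::comm_ring_1 \<Rightarrow> 'b::ab_group_add \<Rightarrow> 'b"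
  assumes "z \<in> N"
  shows "(dsym (a + z) 1 - dsym a 1) * dmon (dlinear ys)
    \<in> rel_span scale (Suc (length ys)) (dsym_shifts (Suc (length ys)) N)"
proof -
  let ?n = "Suc (length ys)"
  have diff: "dseries_diff a (z # ys) $ ?n \<in> rel_span scale ?n (dsym_shifts ?n N)"
    using rel_span_span[OF dseries_diff_nth_shift[OF assms, of a ys ?n]] by simp
  have hom: "(dsym (a + z) 1 - dsym a 1) * dmon (dlinear ys) \<in> dhom ?n"
    by (rule dhom_dsym_diff_mult_dmon) simp
  have "(dsym (a + z) 1 - dsym a 1 - dsym z 1) * dmon (dlinear ys)
      - (dseries_diff a (z # ys) $ length (z # ys) - dmon (dlinear (z # ys))) \<in> dideal scale (\<lambda>x. x)"
    by (intro dideal_diff dideal_mult_right dsym_one_add_cong dseries_diff_nth_length)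
  then have "(dsym (a + z) 1 - dsym a 1) * dmon (dlinear ys) - dseries_diff a (z # ys) $ ?n
      \<in> dideal scale (\<lambda>x. x)"
    by (simp add: dlinear_def dmon_add_mset algebra_simps)
  from rel_span_cong[OF dsym_shifts_dhom diff hom this] show ?thesis .
qed

text \<open>After multiplication by the unit \<open>k! * dfact M\<close> both monomials become products of
  degree-one symbols that differ in \<open>k\<close> factors, which are shifted by \<open>z\<close> one at a time.\<close>

lemma dsym_shift_mult_dmon_in_rel_span_intermediate:
  fixes scale :: "'a::comm_ring_1 \<Rightarrow> 'b::ab_group_add \<Rightarrow> 'b"
  assumes unit: "(of_nat (fact (n - 1)) :: 'a) dvd 1"
    and z: "z \<in> N" and w: "dweight M + k = n" and k: "0 < k" "k < n"
  shows "(dsym (a + z) k - dsym a k) * dmon M \<in> rel_span scale n (dsym_shifts n N)"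
proof -
  let ?S = "rel_span scale n (dsym_shifts n N)"
  let ?D = "(dsym (a + z) k - dsym a k) * dmon M"
  have shift_flat: "dmon (m1 + image_mset (apfst (\<lambda>x. x + z)) m2) - dmon (m1 + m2) \<in> ?S"
    if "\<forall>s\<in>#m1. snd s = 1" "\<forall>s\<in>#m2. snd s = 1" "dweight m1 + dweight m2 = n" for m1 m2
  proof (rule dmon_substitution_telescope[OF rel_span_subspace _ _ that])
    fix x :: 'b and i :: nat and M' :: "('b \<times> nat) multiset"
    assume "snd (x, i) = 1" "\<forall>s\<in>#M'. snd s = 1" "dweight M' + i = n"
    moreover obtain ys where "M' = dlinear ys"
      using weight_one_eq_dlinear \<open>\<forall>s\<in>#M'. snd s = 1\<close> by blast
    ultimately show "(dsym (x + z) i - dsym x i) * dmon M' \<in> ?S"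
      using dsym_one_shift_mult_dlinear_in_rel_span[OF z, of x ys scale] by simp
  qed simp
  define C where "C = dfact (add_mset (a, k) M)"
  have "\<forall>s\<in>#add_mset (a, k) M. snd s \<le> n - 1"
    using w k snd_le_dweight by fastforce
  then have C_unit: "(of_nat C :: 'a) dvd 1"
    unfolding C_def by (rule of_nat_dfact_unit[OF unit])
  have flat_cong: "of_nat C * (dsym b k * dmon M) - dmon (replicate_mset k (b, 1) + dflat M)
      \<in> dideal scale (\<lambda>x. x)" for b
    using dfact_mult_dmon_cong[of "add_mset (b, k) M" scale]
    by (simp add: C_def dmon_add_mset mult.assoc)
  have "dmon (dflat M + image_mset (apfst (\<lambda>x. x + z)) (replicate_mset k (a, 1)))
      - dmon (dflat M + replicate_mset k (a, 1)) \<in> ?S"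
    using w by (intro shift_flat) (auto dest: snd_in_dflat)
  moreover have "of_nat C * ?D \<in> dhom n"
    using w by (intro dhom_of_nat_mult dhom_dsym_diff_mult_dmon)
  moreover have "of_nat C * ?D
      - (dmon (dflat M + image_mset (apfst (\<lambda>x. x + z)) (replicate_mset k (a, 1)))
         - dmon (dflat M + replicate_mset k (a, 1))) \<in> dideal scale (\<lambda>x. x)"
    using dideal_diff[OF flat_cong[of "a + z"] flat_cong[of a]]
    by (simp add: algebra_simps add.commute)
  ultimately have "of_nat C * ?D \<in> ?S"
    by (rule rel_span_cong[OF dsym_shifts_dhom])
  then show ?thesis
    by (rule rel_span_of_nat_unit_cancel[OF C_unit])
qed

lemma dsym_shift_mult_dmon_in_rel_span:
  fixes scale :: "'a::comm_ring_1 \<Rightarrow> 'b::ab_group_add \<Rightarrow> 'b"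
  assumes unit: "(of_nat (fact (n - 1)) :: 'a) dvd 1" and z: "z \<in> N" and w: "dweight M + k = n"
  shows "(dsym (a + z) k - dsym a k) * dmon M \<in> rel_span scale n (dsym_shifts n N)"
proof -
  let ?D = "(dsym (a + z) k - dsym a k) * dmon M"
  have D_hom: "?D \<in> dhom n"
    using w by (rule dhom_dsym_diff_mult_dmon)
  consider "k = 0" | "k = n" "0 < k" | "0 < k" "k < n"
    using w by linarith
  then show ?thesis
  proof cases
    case 1
    have "((dsym (a + z) 0 - 1) - (dsym a 0 - 1)) * dmon M \<in> dideal scale (\<lambda>x. x)"
      using dideal_diff[OF dsym_zero_rel[of "\<lambda>x. x" "a + z" scale] dsym_zero_rel[of "\<lambda>x. x" a scale]]
      by (rule dideal_mult_right)
    then have "?D \<in> dideal scale (\<lambda>x. x)"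
      using 1 by simp
    from rel_span_rel[OF this D_hom] show ?thesis .
  next
    case 2
    have shift: "dsym (a + z) n - dsym a n \<in> rel_span scale n (dsym_shifts n N)"
      using z by (intro rel_span_base) (auto simp: dsym_shifts_def)
    have "(dsym (a + z) n - dsym a n) * (dmon M - 1) \<in> dideal scale (\<lambda>x. x)"
      using 2 w by (intro dideal_mult_left dweight_zero_dmon_cong) simp
    then have "?D - (dsym (a + z) n - dsym a n) \<in> dideal scale (\<lambda>x. x)"
      using 2 by (simp add: algebra_simps)
    from rel_span_cong[OF dsym_shifts_dhom shift D_hom this] show ?thesis .
  next
    case 3
    then show ?thesis
      using dsym_shift_mult_dmon_in_rel_span_intermediate[OF unit z w] by blast
  qed
qed

text \<open>On sets that are not cosets \<open>coset_rep\<close> takes arbitrary values; such symbols may occur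
  in the ideal of \<open>M/N\<close>, which is harmless because the lemmas below hold for every monomial.\<close>

definition coset_rep :: "'b::ab_group_add set \<Rightarrow> 'b set \<Rightarrow> 'b" where
  "coset_rep N C = (SOME x. C = coset N x)"

lemma coset_coset_rep [simp]: "coset N (coset_rep N (coset N x)) = coset N x"
  unfolding coset_rep_def by (rule someI_ex[where P = "\<lambda>y. coset N x = coset N y", symmetric]) blast

context
  fixes scale :: "'a::comm_ring_1 \<Rightarrow> 'b::ab_group_add \<Rightarrow> 'b" and N :: "'b set"
  assumes module: "module scale" and subspace: "module.subspace scale N"
begin

lemma coset_add_eq: "y \<in> N \<Longrightarrow> coset N (x + y) = coset N x"
  unfolding coset_def
proof safe
  fix y w assume "y \<in> N" "w \<in> N"
  then show "x + y + w \<in> (+) x ` N" "x + w \<in> (+) (x + y) ` N"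
    using module.subspace_add[OF module subspace] module.subspace_diff[OF module subspace]
    by (auto intro!: image_eqI[of _ _ "y + w"] image_eqI[of _ _ "w - y"] simp: algebra_simps)
qed

lemma coset_rep_diff: "coset_rep N (coset N x) - x \<in> N"
proof -
  define r where "r = coset_rep N (coset N x)"
  have "x \<in> coset N x"
    using module.subspace_0[OF module subspace] by (force simp: coset_def)
  then have "x \<in> coset N r"
    by (simp add: r_def)
  then obtain w where "w \<in> N" "x = r + w"
    unfolding coset_def by blast
  then show ?thesis
    unfolding r_def[symmetric] using module.subspace_neg[OF module subspace] by simp
qed

end

context
  fixes scale :: "'a::comm_ring_1 \<Rightarrow> 'b::ab_group_add \<Rightarrow> 'b" and N :: "'b set" and n :: nat
  assumes unit: "(of_nat (fact (n - 1)) :: 'a) dvd 1"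
    and module: "module scale" and subspace: "module.subspace scale N"
begin

lemma diff_dmap_coset_rep_in_rel_span:
  assumes "u \<in> dhom n"
  shows "u - dmap (coset_rep N \<circ> coset N) u \<in> rel_span scale n (dsym_shifts n N)"
proof -
  interpret dpoly: module "dscale :: 'a \<Rightarrow> ('b, 'a) dpoly \<Rightarrow> _" by (rule module_dscale)
  let ?h = "coset_rep N \<circ> coset N"
  let ?S = "rel_span scale n (dsym_shifts n N)"
  have dmon_case: "dmon m - dmap ?h (dmon m) \<in> ?S" if "dweight m = n" for m
  proof -
    have "dmon ({#} + image_mset (apfst ?h) m) - dmon ({#} + m) \<in> ?S"
    proof (rule dmon_substitution_telescope[OF rel_span_subspace, of "\<lambda>_. True"])
      fix x :: 'b and i :: nat and M :: "('b \<times> nat) multiset"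
      assume "dweight M + i = n"
      from dsym_shift_mult_dmon_in_rel_span[OF unit coset_rep_diff[OF module subspace, of x] this,
          where a = x]
      show "(dsym (?h x) i - dsym x i) * dmon M \<in> ?S"
        by simp
    qed (use that in simp_all)
    from rel_span_diff[OF rel_span_zero this] show ?thesis
      by simp
  qed
  show ?thesis
    using assms unfolding dhom_def
  proof (induction rule: dpoly.span_induct_alt)
    case base
    show ?case by (simp add: dmap.zero rel_span_zero)
  next
    case (step c x y)
    then obtain m where x: "x = dmon m" and m: "dweight m = n"
      by blast
    have "dscale c (x - dmap ?h x) + (y - dmap ?h y) \<in> ?S"
      unfolding x by (rule rel_span_add[OF rel_span_scale[OF dmon_case[OF m]] step(2)])
    then show ?case
      by (simp add: dmap_add dmap_dscale dpoly.scale_right_diff_distrib algebra_simps comp_def)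
  qed
qed

text \<open>Write \<open>h = coset_rep N \<circ> coset N\<close>.  Since \<open>h\<close> is idempotent, both \<open>dmon M * dmap h r\<close>
  and \<open>dmon M * r\<close> are congruent to \<open>dmap h (dmon M * r)\<close> modulo the span of the shifts.\<close>

lemma dmon_mult_dmap_coset_rep_in_rel_span:
  assumes r: "r \<in> dideal scale (\<lambda>x. x)" "r \<in> dhom d" and w: "dweight M + d = n"
  shows "dmon M * dmap (coset_rep N \<circ> coset N) r \<in> rel_span scale n (dsym_shifts n N)"
proof -
  let ?h = "coset_rep N \<circ> coset N"
  let ?v = "dmon M * dmap ?h r"
  let ?S = "rel_span scale n (dsym_shifts n N)"
  have "?h \<circ> ?h = ?h"
    by (simp add: fun_eq_iff)
  then have idem: "dmap ?h ?v = dmap ?h (dmon M * r)"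
    by (simp add: dmap_mult dmap_dmap)
  have rel: "dmon M * r \<in> ?S"
    using r w by (intro rel_span_rel dideal_mult_left dhom_mult_dmon)
  have reduce_rel: "dmon M * r - dmap ?h (dmon M * r) \<in> ?S"
    using r w by (intro diff_dmap_coset_rep_in_rel_span dhom_mult_dmon)
  have reduce_v: "?v - dmap ?h ?v \<in> ?S"
    using r w by (intro diff_dmap_coset_rep_in_rel_span dhom_mult_dmon dmap_dhom)
  from rel_span_add[OF rel_span_diff[OF reduce_v reduce_rel] rel] show ?thesis
    unfolding idem by simp
qed

lemma dmap_coset_rep_dhom_part_single_mult_in_rel_span:
  assumes "r \<in> drels scale (\<lambda>x. x)"
  shows "dmap (coset_rep N) (dhom_part n (Poly_Mapping.single m a * dmap (coset N) r))
    \<in> rel_span scale n (dsym_shifts n N)"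
proof -
  obtain d where d: "r \<in> dhom d"
    using drels_dhom[OF assms] by blast
  have hom: "Poly_Mapping.single m a * dmap (coset N) r \<in> dhom (dweight m + d)"
    by (rule dhom_mult[OF dhom_single[OF refl] dmap_dhom[OF d]])
  show ?thesis
  proof (cases "dweight m + d = n")
    case True
    have "dmon (image_mset (apfst (coset_rep N)) m) * dmap (coset_rep N \<circ> coset N) r
        \<in> rel_span scale n (dsym_shifts n N)"
      using True by (intro dmon_mult_dmap_coset_rep_in_rel_span[OF drels_dideal[OF assms] d]) simp
    then show ?thesis
      using hom True
      by (simp add: dhom_part_dhom dmap_mult dmap_dmap dmap_dscale single_mult_eq_dscale[where c = a]
          rel_span_scale)
  next
    case False
    then show ?thesis
      using hom by (simp add: dhom_part_other dmap.zero rel_span_zero)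
  qed
qed

lemma dmap_coset_rep_dhom_part_in_rel_span:
  assumes "w \<in> dideal scale (coset N)"
  shows "dmap (coset_rep N) (dhom_part n w) \<in> rel_span scale n (dsym_shifts n N)"
proof -
  interpret ring_module: module "(*) :: ('b set, 'a) dpoly \<Rightarrow> _" by (rule module_mult)
  show ?thesis
    using assms unfolding dideal_def
  proof (induction rule: ring_module.span_induct_alt)
    case base
    show ?case by (simp add: dhom_part.zero dmap.zero rel_span_zero)
  next
    case (step c r y)
    then obtain r' where r': "r' \<in> drels scale (\<lambda>x. x)" "r = dmap (coset N) r'"
      unfolding drels_eq_image_dmap[of scale "coset N"] by blast
    have "c * r = (\<Sum>m\<in>Poly_Mapping.keys c. Poly_Mapping.single m (Poly_Mapping.lookup c m) * r)"
      by (subst poly_mapping_sum_single[symmetric, of c]) (simp add: sum_distrib_right)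
    then have "dmap (coset_rep N) (dhom_part n (c * r)) \<in> rel_span scale n (dsym_shifts n N)"
      using r' by (simp add: dhom_part.sum dmap.sum rel_span_sum
          dmap_coset_rep_dhom_part_single_mult_in_rel_span)
    then show ?case
      using step(2) by (simp add: dhom_part.add dmap_add rel_span_add)
  qed
qed

lemma reduction_kernel_eq:
  "{u \<in> dhom n. dmap (coset N) u \<in> dideal scale (coset N)} = rel_span scale n (dsym_shifts n N)"
proof
  show "{u \<in> dhom n. dmap (coset N) u \<in> dideal scale (coset N)} \<subseteq> rel_span scale n (dsym_shifts n N)"
  proof safe
    fix u assume u: "u \<in> dhom n" "dmap (coset N) u \<in> dideal scale (coset N)"
    have "dmap (coset_rep N) (dhom_part n (dmap (coset N) u)) \<in> rel_span scale n (dsym_shifts n N)"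
      using u(2) by (rule dmap_coset_rep_dhom_part_in_rel_span)
    then have "dmap (coset_rep N \<circ> coset N) u \<in> rel_span scale n (dsym_shifts n N)"
      using u(1) by (simp add: dhom_part_dhom dmap_dhom dmap_dmap)
    from rel_span_add[OF diff_dmap_coset_rep_in_rel_span[OF u(1)] this]
    show "u \<in> rel_span scale n (dsym_shifts n N)"
      by simp
  qed
  let ?K = "{u \<in> dhom n. dmap (coset N) u \<in> dideal scale (coset N)}"
  have "module.subspace dscale ?K"
  proof (rule module.subspaceI[OF module_dscale])
    show "0 \<in> ?K"
      using module.subspace_0[OF module_dscale dhom_subspace] by (simp add: dmap.zero dideal_zero)
    show "x + y \<in> ?K" if "x \<in> ?K" "y \<in> ?K" for x y
      using that by (simp add: dhom_add dmap_add dideal_add)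
    show "dscale c x \<in> ?K" if "x \<in> ?K" for c x
      using that by (simp add: dscale_def dhom_dconst_mult dmap_mult dideal_mult_left)
  qed
  moreover have "dsym_shifts n N \<subseteq> ?K"
  proof
    fix p :: "('b, 'a) dpoly" assume p: "p \<in> dsym_shifts n N"
    then obtain x y where "y \<in> N" "p = dsym (x + y) n - dsym x n"
      unfolding dsym_shifts_def by blast
    then have "dmap (coset N) p = 0"
      by (simp add: dmap.diff coset_add_eq[OF module subspace])
    then show "p \<in> ?K"
      using p dsym_shifts_dhom by (auto simp: dideal_zero)
  qed
  moreover have "dideal scale (\<lambda>x. x) \<inter> dhom n \<subseteq> ?K"
    by (auto simp: dmap_dideal)
  ultimately show "rel_span scale n (dsym_shifts n N) \<subseteq> ?K"
    unfolding rel_span_def by (intro module.span_minimal[OF module_dscale]) auto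
qed

end

theorem lemma6p1:
  fixes scale :: "'a::comm_ring_1 \<Rightarrow> 'b::ab_group_add \<Rightarrow> 'b"
    and n :: nat
  assumes "n \<ge> 1"
    and "(of_nat (fact (n - 1)) :: 'a) dvd 1"
    and "Modules.module scale"
  shows "dhom n \<subseteq>
           {a + b | a b. a \<in> Modules.module.span dscale {dsym x n | x. True}
                        \<and> b \<in> dideal scale (\<lambda>x. x) \<inter> dhom n}
       \<and> (\<forall>N. Modules.module.subspace scale N \<longrightarrow>
         {u \<in> dhom n. dmap (coset N) u \<in> dideal scale (coset N)} =
           {a + b | a b. a \<in> Modules.module.span dscale {dsym (x + y) n - dsym x n | x y. y \<in> N}
                        \<and> b \<in> dideal scale (\<lambda>x. x) \<inter> dhom n})"
proof
  show "dhom n \<subseteq> {a + b | a b. a \<in> module.span dscale {dsym x n | x. True}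
                                \<and> b \<in> dideal scale (\<lambda>x. x) \<inter> dhom n}"
    using dhom_subset_rel_span_pure[OF assms(2), of scale]
    unfolding rel_span_eq pure_dsyms_def .
  show "\<forall>N. module.subspace scale N \<longrightarrow>
      {u \<in> dhom n. dmap (coset N) u \<in> dideal scale (coset N)} =
        {a + b | a b. a \<in> module.span dscale {dsym (x + y) n - dsym x n | x y. y \<in> N}
                     \<and> b \<in> dideal scale (\<lambda>x. x) \<inter> dhom n}"
    using reduction_kernel_eq[OF assms(2) assms(3)]
    unfolding rel_span_eq dsym_shifts_def by blast
qed

end
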